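(* Let $A\in\mathbb{R}^{n\times d}$ have i.i.d. rows with mean zero and covariance $\Sigma$, let $b\in\mathbb{R}^n$, and let $A$ be split row-wise into $m$ blocks $A^{(1)},\dots,A^{(m)}\in\mathbb{R}^{(n/m)\times d}$. Let $f(x)=\frac1{2n}\|Ax-b\|_2^2+\frac\lambda2\|x\|_2^2$ ($\lambda>0$), $g(x)=\nabla f(x)$, $H=\frac1nA^TA+\lambda I$, $d_\lambda=\mathrm{tr}(\Sigma(\Sigma+\lambda I)^{-1})$ with $md_\lambda<n$, and \[\tilde H=\left(\frac1m\sum_{i=1}^m\left(\frac{1}{1-\frac{md_\lambda}{n}}\frac mn A^{(i)T}A^{(i)}+\lambda I\right)^{-1}\right)^{-1}.\] Let $\omega^\star=\arg\min f$, $\omega_{t+1}=\omega_t-\tilde H^{-1}g(\omega_t)$ and $\Delta_t=\omega_t-\omega^\star$. Then $\|\Delta_{t+1}\|\le\beta\|\Delta_t\|$, where \[\beta=\frac{\sqrt2\alpha}{\sqrt{1-\alpha^2}}\sqrt{\frac{\sigma_{\max}+\lambda+\alpha_0}{\sigma_{\min}+\lambda-\alpha_0}},\] $\alpha_0=\|\Sigma-\frac1nA^TA\|$, $\alpha_1=\|\tilde H^{-1}-\mathbb{E}[\tilde H^{-1}]\|$, $\Omega_0=\mathbb{E}[\tilde H^{-1}]-(\Sigma+\lambda I)^{-1}$, $\alpha=(\sigma_{\max}+\lambda+\alpha_0)\left(\frac1{\lambda^2}\alpha_0+\alpha_1+\|\Omega_0\|\right)$, and $\sigma_{\min},\sigma_{\max}$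 are the smallest and largest eigenvalues of $\Sigma$.
   Context: $\|\cdot\|$ denotes the Euclidean norm on vectors and the spectral norm on matrices. $n/m$ is assumed to be an integer. *)

theory Defs
  imports "HOL-Analysis.Analysis" "HOL-Probability.Probability"
begin

definition spec_norm :: "real^'d^'d \<Rightarrow> real" where
  "spec_norm S = onorm (\<lambda>x. S *v x)"

definition outer :: "real^'d \<Rightarrow> real^'d \<Rightarrow> real^'d^'d" where
  "outer u v = (\<chi> i j. u $ i * v $ j)"

text \<open>Gram matrix of the rows A j, j in J, i.e. A_J^T A_J for the row submatrix A_J.\<close>
definition gram :: "(nat \<Rightarrow> real^'d) \<Rightarrow> nat set \<Rightarrow> real^'d^'d" where
  "gram A J = (\<Sum>j\<in>J. outer (A j) (A j))"

text \<open>Row indices (0-based) of the i-th block (0 <= i < m) when n rows are split into m blocks.\<close>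
definition block :: "nat \<Rightarrow> nat \<Rightarrow> nat \<Rightarrow> nat set" where
  "block n m i = {i * (n div m) ..< (Suc i) * (n div m)}"

definition eigenvalues :: "real^'d^'d \<Rightarrow> real set" where
  "eigenvalues S = {\<mu>. \<exists>v. v \<noteq> 0 \<and> S *v v = \<mu> *s v}"

definition eff_dim :: "real^'d^'d \<Rightarrow> real \<Rightarrow> real" where
  "eff_dim Sig lam = trace (Sig ** matrix_inv (Sig + lam *\<^sub>R mat 1))"

definition Htilde :: "nat \<Rightarrow> nat \<Rightarrow> real \<Rightarrow> real \<Rightarrow> (nat \<Rightarrow> real^'d) \<Rightarrow> real^'d^'d" where
  "Htilde n m lam dl A = matrix_inv ((1 / real m) *\<^sub>R
     (\<Sum>i<m. matrix_inv (((1 / (1 - real m * dl / real n)) * (real m / real n)) *\<^sub>R gram A (block n m i)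
                          + lam *\<^sub>R mat 1)))"

end

theory Submission
  imports Defs
begin

(* Write D = w t - w* and y = H D, where H = A^T A / n + lam I is the Hessian of the ridge
   objective; the gradient at w t is y, so the next error is D - Q y with Q = Htilde^-1.
   With S = Sigma + lam I the identity D - S^-1 y = S^-1 (S - H) H^-1 y splits it as
     S^-1 (S - H) H^-1 y - Omega_0 y - (Q - EQ) y,   EQ the expectation of Q.
   Since S and H are bounded below by lam, the three terms are at most a0 / lam^2, |Omega_0|
   and a1 times |y|, and |y| <= (smax + lam + a0) |D| because H = S - (S - H) and the second
   moment matrix Sigma is symmetric positive semidefinite, so |Sigma x| <= smax |x|.
   Hence |D'| <= alpha |D|, and alpha <= beta as 0 <= alpha < 1 and smin <= smax. *)

lemma spec_norm_mult_vec_le: "norm (S *v x) \<le> spec_norm S * norm x"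
  unfolding spec_norm_def by (rule onorm[OF matrix_vector_mul_bounded_linear])

lemma spec_norm_nonneg: "0 \<le> spec_norm S"
  unfolding spec_norm_def by (rule onorm_pos_le[OF matrix_vector_mul_bounded_linear])

subsection \<open>Symmetric positive semidefinite matrices\<close>

lemma symmetric_inner_mult_vec_commute:
  fixes S :: "real^'d^'d"
  assumes "transpose S = S"
  shows "x \<bullet> (S *v y) = y \<bullet> (S *v x)"
proof -
  have "x \<bullet> (S *v y) = (x v* transpose S) \<bullet> y"
    using assms by (simp add: dot_lmul_matrix)
  then show ?thesis by (simp add: inner_commute)
qed

lemma nonneg_quadratic_discriminant:
  fixes a b c :: real
  assumes c: "c \<ge> 0" and nonneg: "\<And>t. 0 \<le> a + 2*b*t + c*t\<^sup>2"
  shows "b\<^sup>2 \<le> a*c"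
proof (cases "c = 0")
  case True
  have "b = 0"
  proof (rule ccontr)
    assume b: "b \<noteq> 0"
    have "0 \<le> a + 2*b*(-(\<bar>a\<bar>+1)/(2*b)) + c*(-(\<bar>a\<bar>+1)/(2*b))\<^sup>2" by (rule nonneg)
    also have "\<dots> = a - (\<bar>a\<bar>+1)" using b True by (simp add: field_simps)
    finally show False by linarith
  qed
  then show ?thesis using True by simp
next
  case False
  then have c_pos: "c > 0" using c by simp
  have "0 \<le> a + 2*b*(-b/c) + c*(-b/c)\<^sup>2" by (rule nonneg)
  also have "\<dots> = a - b\<^sup>2/c" using c_pos by (simp add: field_simps power2_eq_square)
  finally have "b\<^sup>2/c \<le> a" by simp
  then show ?thesis using c_pos by (simp add: field_simps)
qed

lemma psd_cauchy_schwarz: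
  fixes S :: "real^'d^'d"
  assumes sym: "transpose S = S" and psd: "\<And>z. 0 \<le> z \<bullet> (S *v z)"
  shows "(x \<bullet> (S *v y))\<^sup>2 \<le> (x \<bullet> (S *v x)) * (y \<bullet> (S *v y))"
proof (rule nonneg_quadratic_discriminant)
  show "0 \<le> y \<bullet> (S *v y)" by (rule psd)
  fix t :: real
  have "(x + t *\<^sub>R y) \<bullet> (S *v (x + t *\<^sub>R y)) =
        x \<bullet> (S *v x) + 2 * (x \<bullet> (S *v y)) * t + (y \<bullet> (S *v y)) * t\<^sup>2"
    using symmetric_inner_mult_vec_commute[OF sym, of y x]
    by (simp add: algebra_simps power2_eq_square)
  then show "0 \<le> x \<bullet> (S *v x) + 2 * (x \<bullet> (S *v y)) * t + (y \<bullet> (S *v y)) * t\<^sup>2"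
    using psd[of "x + t *\<^sub>R y"] by simp
qed

lemma psd_quadratic_form_eq_0_imp:
  fixes S :: "real^'d^'d"
  assumes sym: "transpose S = S" and psd: "\<And>z. 0 \<le> z \<bullet> (S *v z)"
    and zero: "v \<bullet> (S *v v) = 0"
  shows "S *v v = 0"
proof -
  have "((S *v v) \<bullet> (S *v v))\<^sup>2 \<le> ((S *v v) \<bullet> (S *v (S *v v))) * (v \<bullet> (S *v v))"
    by (rule psd_cauchy_schwarz[OF sym psd])
  then have "((S *v v) \<bullet> (S *v v))\<^sup>2 = 0" using zero by (simp add: order_antisym)
  then show ?thesis by simp
qed

lemma psd_norm_mult_vec_le_of_quadratic_form_le:
  fixes S :: "real^'d^'d"
  assumes sym: "transpose S = S" and psd: "\<And>z. 0 \<le> z \<bullet> (S *v z)"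
    and q_le: "\<And>x. x \<bullet> (S *v x) \<le> \<mu> * (norm x)\<^sup>2" and \<mu>_nonneg: "0 \<le> \<mu>"
  shows "norm (S *v x) \<le> \<mu> * norm x"
proof -
  let ?y = "S *v x"
  have "(?y \<bullet> (S *v x))\<^sup>2 \<le> (?y \<bullet> (S *v ?y)) * (x \<bullet> (S *v x))"
    by (rule psd_cauchy_schwarz[OF sym psd])
  also have "\<dots> \<le> (\<mu> * (norm ?y)\<^sup>2) * (\<mu> * (norm x)\<^sup>2)"
    by (intro mult_mono q_le psd) (use \<mu>_nonneg in auto)
  finally have fourth: "(norm ?y)\<^sup>2 * (norm ?y)\<^sup>2 \<le> (\<mu> * norm x)\<^sup>2 * (norm ?y)\<^sup>2"
    by (simp add: dot_square_norm power_mult_distrib mult_ac power2_eq_square)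
  have "(norm ?y)\<^sup>2 \<le> (\<mu> * norm x)\<^sup>2"
  proof (cases "?y = 0")
    case False
    then have "0 < (norm ?y)\<^sup>2" by simp
    with fourth show ?thesis by (rule mult_right_le_imp_le)
  qed simp
  then show ?thesis using \<mu>_nonneg by (simp add: power2_le_iff_abs_le)
qed

lemma psd_exists_eigenvalue_quadratic_form_le:
  fixes S :: "real^'d^'d"
  assumes sym: "transpose S = S" and psd: "\<And>z. 0 \<le> z \<bullet> (S *v z)"
  shows "\<exists>\<mu>\<in>eigenvalues S. 0 \<le> \<mu> \<and> (\<forall>x. x \<bullet> (S *v x) \<le> \<mu> * (norm x)\<^sup>2)"
proof -
  let ?q = "\<lambda>x. x \<bullet> (S *v x)"
  have "continuous_on (sphere (0::real^'d) 1) ?q"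
    by (intro continuous_intros continuous_on_compose2[OF linear_continuous_on[OF matrix_vector_mul_bounded_linear]])
      auto
  moreover have "sphere (0::real^'d) 1 \<noteq> {}" by simp
  ultimately obtain v where v: "v \<in> sphere 0 1" and v_max: "\<forall>y\<in>sphere 0 1. ?q y \<le> ?q v"
    using continuous_attains_sup[OF compact_sphere] by blast
  define \<mu> where "\<mu> = ?q v"
  have q_le: "?q x \<le> \<mu> * (norm x)\<^sup>2" for x
  proof (cases "x = 0")
    case False
    then have "x /\<^sub>R norm x \<in> sphere 0 1" by simp
    then have "?q (x /\<^sub>R norm x) \<le> \<mu>" using v_max \<mu>_def by blast
    moreover have "?q (x /\<^sub>R norm x) = ?q x / (norm x)\<^sup>2"
      by (simp add: matrix_vector_mult_scaleR power2_eq_square divide_inverse mult_ac)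
    ultimately have "?q x / (norm x)\<^sup>2 \<le> \<mu>" by simp
    moreover have "0 < (norm x)\<^sup>2" using False by simp
    ultimately show ?thesis by (simp add: pos_divide_le_eq)
  qed simp
  \<comment> \<open>\<open>\<mu> I - S\<close> is positive semidefinite and its quadratic form vanishes at \<open>v\<close>,
    so \<open>v\<close> is an eigenvector of \<open>S\<close>.\<close>
  define T where "T = \<mu> *\<^sub>R mat 1 - S"
  have T_mult: "T *v x = \<mu> *\<^sub>R x - S *v x" for x
    by (simp add: T_def matrix_vector_mult_diff_rdistrib scaleR_matrix_vector_assoc[symmetric])
  have "transpose T = T" using sym by (auto simp: T_def vec_eq_iff transpose_def mat_def)
  moreover have "0 \<le> z \<bullet> (T *v z)" for z
    using q_le[of z] by (simp add: T_mult inner_diff_right dot_square_norm)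
  moreover have "v \<bullet> (T *v v) = 0" using v by (simp add: T_mult inner_diff_right dot_square_norm \<mu>_def)
  ultimately have "T *v v = 0" by (rule psd_quadratic_form_eq_0_imp)
  then have "S *v v = \<mu> *s v" by (simp add: T_mult scalar_mult_eq_scaleR)
  moreover have "v \<noteq> 0" using v by auto
  ultimately have "\<mu> \<in> eigenvalues S" unfolding eigenvalues_def by blast
  moreover have "\<mu> \<ge> 0" unfolding \<mu>_def by (rule psd)
  ultimately show ?thesis using q_le by blast
qed

lemma finite_eigenvalues_symmetric:
  fixes S :: "real^'d^'d"
  assumes sym: "transpose S = S"
  shows "finite (eigenvalues S)"
proof -
  define E where "E = eigenvalues S"
  define e where "e = (\<lambda>\<mu>. SOME v. v \<noteq> 0 \<and> S *v v = \<mu> *s v)"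
  have e: "e \<mu> \<noteq> 0 \<and> S *v e \<mu> = \<mu> *\<^sub>R e \<mu>" if "\<mu> \<in> E" for \<mu>
  proof -
    have "\<exists>v. v \<noteq> 0 \<and> S *v v = \<mu> *s v" using that unfolding E_def eigenvalues_def by blast
    then have "e \<mu> \<noteq> 0 \<and> S *v e \<mu> = \<mu> *s e \<mu>" unfolding e_def by (rule someI_ex)
    then show ?thesis by (simp add: scalar_mult_eq_scaleR)
  qed
  have inj: "inj_on e E"
  proof (rule inj_onI)
    fix a b assume a: "a \<in> E" and b: "b \<in> E" and eq: "e a = e b"
    have "a *\<^sub>R e a = b *\<^sub>R e a" using e[OF a] e[OF b] eq by metis
    then have "(a - b) *\<^sub>R e a = 0" by (simp add: algebra_simps)
    then show "a = b" using e[OF a] by simp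
  qed
  have "pairwise orthogonal (e ` E)"
  proof (clarsimp simp: pairwise_def)
    fix a b assume a: "a \<in> E" and b: "b \<in> E" and ne: "e a \<noteq> e b"
    have "a * (e b \<bullet> e a) = e b \<bullet> (S *v e a)" using e[OF a] by simp
    also have "\<dots> = e a \<bullet> (S *v e b)" by (rule symmetric_inner_mult_vec_commute[OF sym])
    also have "\<dots> = b * (e b \<bullet> e a)" using e[OF b] by (simp add: inner_commute)
    finally have "(a - b) * (e b \<bullet> e a) = 0" by (simp add: algebra_simps)
    moreover have "a \<noteq> b" using ne by auto
    ultimately show "orthogonal (e a) (e b)" by (simp add: orthogonal_def inner_commute)
  qed
  moreover have "0 \<notin> e ` E" using e by force
  ultimately have "independent (e ` E)" using pairwise_orthogonal_independent by blast
  then have "finite (e ` E)" using independent_bound by blast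
  then show ?thesis using finite_imageD inj E_def by blast
qed

lemma psd_norm_mult_vec_le_Max_eigenvalues:
  fixes S :: "real^'d^'d"
  assumes sym: "transpose S = S" and psd: "\<And>z. 0 \<le> z \<bullet> (S *v z)"
  shows "norm (S *v x) \<le> Max (eigenvalues S) * norm x"
    and "0 \<le> Max (eigenvalues S)" and "Min (eigenvalues S) \<le> Max (eigenvalues S)"
proof -
  obtain \<mu> where \<mu>: "\<mu> \<in> eigenvalues S" "0 \<le> \<mu>" "\<And>x. norm (S *v x) \<le> \<mu> * norm x"
    using psd_exists_eigenvalue_quadratic_form_le[OF sym psd]
      psd_norm_mult_vec_le_of_quadratic_form_le[OF sym psd] by meson
  have fin: "finite (eigenvalues S)" by (rule finite_eigenvalues_symmetric[OF sym])
  then have "\<mu> \<le> Max (eigenvalues S)" using \<mu>(1) by simp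
  then show "norm (S *v x) \<le> Max (eigenvalues S) * norm x" "0 \<le> Max (eigenvalues S)"
    using order_trans[OF \<mu>(3) mult_right_mono[OF _ norm_ge_zero]] \<mu>(2) by auto
  show "Min (eigenvalues S) \<le> Max (eigenvalues S)" using fin \<mu>(1) by (meson Max_ge Min_le order_trans)
qed

subsection \<open>Matrices bounded below and the preconditioned step\<close>

lemma quadratic_form_lower_bound_imp_norm_lower_bound:
  fixes S :: "real^'d^'d"
  assumes "\<And>x. c * (norm x)\<^sup>2 \<le> x \<bullet> (S *v x)"
  shows "c * norm x \<le> norm (S *v x)"
proof (cases "x = 0")
  case False
  have "c * norm x * norm x \<le> norm x * norm (S *v x)"
    using assms[of x] norm_cauchy_schwarz[of x "S *v x"] by (simp add: power2_eq_square mult_ac)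
  then show ?thesis using False by (simp add: mult.commute)
qed simp

lemma psd_add_scaleR_id_lower_bound:
  fixes P :: "real^'d^'d"
  assumes "\<And>z. 0 \<le> z \<bullet> (P *v z)"
  shows "lam * norm x \<le> norm ((P + lam *\<^sub>R mat 1) *v x)"
proof (rule quadratic_form_lower_bound_imp_norm_lower_bound)
  fix x :: "real^'d"
  show "lam * (norm x)\<^sup>2 \<le> x \<bullet> ((P + lam *\<^sub>R mat 1) *v x)"
    using assms[of x] by (simp add: matrix_vector_mult_add_rdistrib scaleR_matrix_vector_assoc[symmetric]
        inner_add_right dot_square_norm)
qed

lemma norm_lower_bound_imp_invertible:
  fixes S :: "real^'d^'d"
  assumes c: "c > 0" and lower: "\<And>x. c * norm x \<le> norm (S *v x)"
  shows "invertible S"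
proof -
  have "inj ((*v) S)"
  proof (rule injI)
    fix x y assume "S *v x = S *v y"
    then have "c * norm (x - y) \<le> 0" using lower[of "x - y"] by (simp add: matrix_vector_mult_diff_distrib)
    then show "x = y" using c by (simp add: mult_le_0_iff)
  qed
  then show ?thesis using matrix_left_invertible_injective invertible_left_inverse by blast
qed

lemma matrix_inv_mult_vec:
  fixes S :: "real^'d^'d"
  assumes "invertible S"
  shows "S *v (matrix_inv S *v y) = y" and "matrix_inv S *v (S *v y) = y"
proof -
  have "S ** matrix_inv S = mat 1 \<and> matrix_inv S ** S = mat 1"
    using assms unfolding invertible_def matrix_inv_def by (rule someI_ex)
  then show "S *v (matrix_inv S *v y) = y" and "matrix_inv S *v (S *v y) = y"
    by (simp_all add: matrix_vector_mul_assoc)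
qed

lemma norm_matrix_inv_mult_vec_le:
  fixes S :: "real^'d^'d"
  assumes c: "c > 0" and lower: "\<And>x. c * norm x \<le> norm (S *v x)"
  shows "norm (matrix_inv S *v y) \<le> norm y / c"
  using lower[of "matrix_inv S *v y"] c
  by (simp add: matrix_inv_mult_vec norm_lower_bound_imp_invertible[OF c lower] field_simps)

lemma preconditioned_step_bound:
  fixes S H Q E :: "real^'d^'d"
  assumes lam: "lam > 0"
    and S_lower: "\<And>x. lam * norm x \<le> norm (S *v x)"
    and H_lower: "\<And>x. lam * norm x \<le> norm (H *v x)"
  shows "norm (v - Q *v (H *v v))
    \<le> (spec_norm (S - H) / lam\<^sup>2 + spec_norm (Q - E) + spec_norm (E - matrix_inv S)) * norm (H *v v)"
proof -
  define y where "y = H *v v"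
  have S_inv: "invertible S" by (rule norm_lower_bound_imp_invertible[OF lam S_lower])
  have v_le: "norm v \<le> norm y / lam"
    using H_lower[of v] lam by (simp add: y_def field_simps)
  have "matrix_inv S *v ((S - H) *v v) = v - matrix_inv S *v y"
    by (simp add: y_def matrix_vector_mult_diff_rdistrib matrix_vector_mult_diff_distrib
        matrix_inv_mult_vec[OF S_inv])
  then have split: "v - Q *v y = matrix_inv S *v ((S - H) *v v) - (E - matrix_inv S) *v y - (Q - E) *v y"
    by (simp add: matrix_vector_mult_diff_rdistrib)
  have "norm (matrix_inv S *v ((S - H) *v v)) \<le> norm ((S - H) *v v) / lam"
    by (rule norm_matrix_inv_mult_vec_le[OF lam S_lower])
  also have "\<dots> \<le> spec_norm (S - H) * norm v / lam"
    by (rule divide_right_mono[OF spec_norm_mult_vec_le]) (use lam in simp)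
  also have "\<dots> \<le> spec_norm (S - H) * (norm y / lam) / lam"
    by (rule divide_right_mono[OF mult_left_mono[OF v_le spec_norm_nonneg]]) (use lam in simp)
  finally have "norm (matrix_inv S *v ((S - H) *v v)) \<le> spec_norm (S - H) / lam\<^sup>2 * norm y"
    by (simp add: power2_eq_square)
  moreover have "norm ((E - matrix_inv S) *v y) \<le> spec_norm (E - matrix_inv S) * norm y"
    and "norm ((Q - E) *v y) \<le> spec_norm (Q - E) * norm y"
    by (rule spec_norm_mult_vec_le)+
  ultimately have "norm (v - Q *v y) \<le> spec_norm (S - H) / lam\<^sup>2 * norm y
      + spec_norm (E - matrix_inv S) * norm y + spec_norm (Q - E) * norm y"
    unfolding split by (smt (verit) norm_triangle_ineq4)
  then show ?thesis by (simp add: y_def algebra_simps)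
qed

lemma norm_mult_vec_le_perturbed:
  fixes S H :: "real^'d^'d"
  assumes S_bound: "\<And>x. norm (S *v x) \<le> c * norm x" and lam: "lam \<ge> 0"
  shows "norm (H *v v) \<le> (c + lam + spec_norm (S + lam *\<^sub>R mat 1 - H)) * norm v"
proof -
  have "H *v v = S *v v + lam *\<^sub>R v - (S + lam *\<^sub>R mat 1 - H) *v v"
    by (simp add: matrix_vector_mult_diff_rdistrib matrix_vector_mult_add_rdistrib
        scaleR_matrix_vector_assoc[symmetric])
  then have "norm (H *v v) \<le> norm (S *v v) + norm (lam *\<^sub>R v) + norm ((S + lam *\<^sub>R mat 1 - H) *v v)"
    by (smt (verit) norm_triangle_ineq norm_triangle_ineq4)
  also have "\<dots> \<le> c * norm v + lam * norm v + spec_norm (S + lam *\<^sub>R mat 1 - H) * norm v"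
    using S_bound[of v] spec_norm_mult_vec_le[of _ v] lam by (intro add_mono) auto
  finally show ?thesis by (simp add: algebra_simps)
qed

lemma preconditioned_step_contraction:
  fixes P H Q E :: "real^'d^'d"
  assumes lam: "lam > 0"
    and P_psd: "\<And>z. 0 \<le> z \<bullet> (P *v z)" and P_bound: "\<And>x. norm (P *v x) \<le> c * norm x"
    and H_lower: "\<And>x. lam * norm x \<le> norm (H *v x)"
  defines "S \<equiv> P + lam *\<^sub>R mat 1"
  shows "norm (v - Q *v (H *v v)) \<le> (c + lam + spec_norm (S - H))
    * (spec_norm (S - H) / lam\<^sup>2 + spec_norm (Q - E) + spec_norm (E - matrix_inv S)) * norm v"
proof -
  let ?\<epsilon> = "spec_norm (S - H) / lam\<^sup>2 + spec_norm (Q - E) + spec_norm (E - matrix_inv S)"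
  have S_lower: "lam * norm x \<le> norm (S *v x)" for x
    unfolding S_def by (rule psd_add_scaleR_id_lower_bound[OF P_psd])
  have "norm (v - Q *v (H *v v)) \<le> ?\<epsilon> * norm (H *v v)"
    by (rule preconditioned_step_bound[OF lam S_lower H_lower])
  also have "\<dots> \<le> ?\<epsilon> * ((c + lam + spec_norm (S - H)) * norm v)"
  proof (rule mult_left_mono)
    show "0 \<le> ?\<epsilon>" by (intro add_nonneg_nonneg divide_nonneg_nonneg spec_norm_nonneg zero_le_power2)
    show "norm (H *v v) \<le> (c + lam + spec_norm (S - H)) * norm v"
      unfolding S_def by (rule norm_mult_vec_le_perturbed[OF P_bound]) (use lam in simp)
  qed
  finally show ?thesis by (simp add: mult_ac)
qed

subsection \<open>Second moment matrices and ridge regression\<close>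

lemma gram_mult_vec: "gram A J *v x = (\<Sum>j\<in>J. (A j \<bullet> x) *\<^sub>R A j)"
  unfolding gram_def outer_def
  by (simp add: vec_eq_iff matrix_vector_mult_def inner_vec_def sum_distrib_left
      sum_distrib_right mult_ac sum.swap[of _ J])

lemma gram_quadratic_form: "x \<bullet> (gram A J *v x) = (\<Sum>j\<in>J. (A j \<bullet> x)\<^sup>2)"
  unfolding gram_mult_vec by (simp add: inner_sum_right power2_eq_square inner_commute)

lemma second_moment_psd:
  fixes M :: "'s measure" and Y :: "'s \<Rightarrow> real^'d" and S :: "real^'d^'d"
  assumes moment: "\<forall>i k. integrable M (\<lambda>s. Y s $ i * Y s $ k) \<and> S $ i $ k = integral\<^sup>L M (\<lambda>s. Y s $ i * Y s $ k)"
  shows "0 \<le> z \<bullet> (S *v z)"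
proof -
  have "z \<bullet> (S *v z) = (\<Sum>i\<in>UNIV. \<Sum>k\<in>UNIV. z$i * z$k * S$i$k)"
    by (simp add: inner_vec_def matrix_vector_mult_def sum_distrib_left mult_ac)
  also have "\<dots> = integral\<^sup>L M (\<lambda>s. \<Sum>i\<in>UNIV. \<Sum>k\<in>UNIV. z$i * z$k * (Y s $ i * Y s $ k))"
    using moment by (simp add: integral_sum)
  also have "\<dots> = integral\<^sup>L M (\<lambda>s. (z \<bullet> Y s)\<^sup>2)"
    by (simp add: inner_vec_def power2_eq_square sum_distrib_left sum_distrib_right mult_ac)
  also have "\<dots> \<ge> 0" by simp
  finally show ?thesis .
qed

lemma ridge_objective_has_derivative:
  fixes A :: "nat \<Rightarrow> real^'d" and b :: "nat \<Rightarrow> real"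
  shows "((\<lambda>x. (1 / (2 * real n)) * (\<Sum>j<n. (A j \<bullet> x - b j)\<^sup>2) + lam / 2 * (norm x)\<^sup>2) has_derivative
     (\<lambda>h. ((1 / real n) *\<^sub>R (\<Sum>j<n. (A j \<bullet> x - b j) *\<^sub>R A j) + lam *\<^sub>R x) \<bullet> h)) (at x)"
proof -
  have squares: "(\<lambda>x. (1 / (2 * real n)) * (\<Sum>j<n. (A j \<bullet> x - b j)\<^sup>2) + lam / 2 * (norm x)\<^sup>2)
     = (\<lambda>x. (1 / (2 * real n)) * (\<Sum>j<n. (A j \<bullet> x - b j) * (A j \<bullet> x - b j)) + lam / 2 * (x \<bullet> x))"
    by (simp add: power2_eq_square power2_norm_eq_inner[symmetric])
  show ?thesis unfolding squares
    apply (rule derivative_eq_intros refl | simp)+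
    apply (simp add: inner_sum_left algebra_simps sum_distrib_left)
    apply (rule ext)
    apply (simp add: inner_commute[of x] sum_divide_distrib sum_subtractf[symmetric]
        sum_distrib_left[symmetric] add_divide_distrib diff_divide_distrib)
    done
qed

lemma ridge_gradient_eq:
  fixes A :: "nat \<Rightarrow> real^'d" and b :: "nat \<Rightarrow> real" and g :: "real^'d \<Rightarrow> real^'d"
  assumes f: "f = (\<lambda>x. (1 / (2 * real n)) * (\<Sum>j<n. (A j \<bullet> x - b j)\<^sup>2) + lam / 2 * (norm x)\<^sup>2)"
    and grad: "\<And>x. (f has_derivative (\<lambda>h. g x \<bullet> h)) (at x)"
    and min: "\<And>x. f wstar \<le> f x"
  shows "g x = ((1 / real n) *\<^sub>R gram A {..<n} + lam *\<^sub>R mat 1) *v (x - wstar)"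
proof -
  define g0 where "g0 = (\<lambda>x. (1 / real n) *\<^sub>R (\<Sum>j<n. (A j \<bullet> x - b j) *\<^sub>R A j) + lam *\<^sub>R x)"
  have f_deriv: "(f has_derivative (\<lambda>h. g0 x \<bullet> h)) (at x)" for x
    unfolding f g0_def by (rule ridge_objective_has_derivative)
  have sum_diff: "(\<Sum>j<n. (A j \<bullet> x - b j) *\<^sub>R A j) - (\<Sum>j<n. (A j \<bullet> wstar - b j) *\<^sub>R A j)
      = (\<Sum>j<n. (A j \<bullet> (x - wstar)) *\<^sub>R A j)"
    unfolding sum_subtractf[symmetric] by (intro sum.cong refl) (simp add: inner_diff_right scaleR_diff_left)
  have "g0 x - g0 wstar = (1 / real n) *\<^sub>R ((\<Sum>j<n. (A j \<bullet> x - b j) *\<^sub>R A j)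
      - (\<Sum>j<n. (A j \<bullet> wstar - b j) *\<^sub>R A j)) + lam *\<^sub>R (x - wstar)"
    unfolding g0_def scaleR_diff_right by simp
  also have "\<dots> = ((1 / real n) *\<^sub>R gram A {..<n} + lam *\<^sub>R mat 1) *v (x - wstar)"
    unfolding sum_diff
    by (simp add: gram_mult_vec matrix_vector_mult_add_rdistrib scaleR_matrix_vector_assoc[symmetric])
  finally have g0_diff: "g0 x - g0 wstar = ((1 / real n) *\<^sub>R gram A {..<n} + lam *\<^sub>R mat 1) *v (x - wstar)" .
  have "(\<lambda>h. g x \<bullet> h) = (\<lambda>h. g0 x \<bullet> h)"
    by (rule has_derivative_unique[OF grad f_deriv])
  then have "g x = g0 x" by (metis inner_commute vector_eq)
  moreover have "(\<lambda>h. g0 wstar \<bullet> h) = (\<lambda>h. 0)"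
    by (rule differential_zero_maxmin[of wstar UNIV f]) (use f_deriv min in auto)
  then have "g0 wstar = 0" by (metis inner_eq_zero_iff)
  ultimately show ?thesis using g0_diff by simp
qed

lemma le_sqrt2_mult_div_sqrt_one_minus_square:
  fixes a c d :: real
  assumes "0 \<le> a" "a < 1" "0 < d" "d \<le> c"
  shows "a \<le> sqrt 2 * a / sqrt (1 - a\<^sup>2) * sqrt (c / d)"
proof -
  have "a\<^sup>2 < 1" using assms by (simp add: abs_square_less_1)
  then have "0 < sqrt (1 - a\<^sup>2)" "sqrt (1 - a\<^sup>2) \<le> 1" using assms by simp_all
  then have "a \<le> a / sqrt (1 - a\<^sup>2)" using assms by (simp add: le_divide_eq mult_left_le)
  moreover have "1 \<le> sqrt 2 * sqrt (c / d)"
    using mult_mono[of 1 "sqrt 2" 1 "sqrt (c / d)"] assms by simp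
  ultimately have "a \<le> (sqrt 2 * sqrt (c / d)) * (a / sqrt (1 - a\<^sup>2))"
    using mult_right_mono[of 1 "sqrt 2 * sqrt (c / d)" "a / sqrt (1 - a\<^sup>2)"] assms by simp
  then show ?thesis by (simp add: mult_ac)
qed

theorem theorem3p1:
  fixes M :: "'s measure" and X :: "nat \<Rightarrow> 's \<Rightarrow> real^'d"
    and Sig :: "real^'d^'d" and n m :: nat and lam :: real and b :: "nat \<Rightarrow> real"
    and s0 :: 's
    and f :: "real^'d \<Rightarrow> real" and g :: "real^'d \<Rightarrow> real^'d"
    and wstar :: "real^'d" and w :: "nat \<Rightarrow> real^'d"
    and a0 a1 alpha smin smax beta :: real and Om :: "real^'d^'d"
  assumes prob: "prob_space M"
    and n_pos: "n > 0" and m_pos: "m > 0" and m_dvd: "m dvd n"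
    and lam_pos: "lam > 0"
    and indep: "prob_space.indep_vars M (\<lambda>_. borel) X {..<n}"
    and ident: "\<forall>j<n. distr M borel (X j) = distr M borel (X 0)"
    and mean0: "\<forall>j<n. integrable M (X j) \<and> integral\<^sup>L M (X j) = 0"
    and cov: "\<forall>i k. integrable M (\<lambda>s. X 0 s $ i * X 0 s $ k)
                 \<and> Sig $ i $ k = integral\<^sup>L M (\<lambda>s. X 0 s $ i * X 0 s $ k)"
    and mdl: "real m * eff_dim Sig lam < real n"
    and s0: "s0 \<in> space M"
    and f_def: "f = (\<lambda>x. (1 / (2 * real n)) * (\<Sum>j<n. (X j s0 \<bullet> x - b j)\<^sup>2) + lam / 2 * (norm x)\<^sup>2)"
    and g_grad: "\<forall>x. (f has_derivative (\<lambda>h. g x \<bullet> h)) (at x)"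
    and wstar_min: "\<forall>x. f wstar \<le> f x"
    and iter: "\<forall>t. w (Suc t) = w t - matrix_inv (Htilde n m lam (eff_dim Sig lam) (\<lambda>j. X j s0)) *v g (w t)"
    and a0_def: "a0 = spec_norm (Sig - (1 / real n) *\<^sub>R gram (\<lambda>j. X j s0) {..<n})"
    and a1_def: "a1 = spec_norm (matrix_inv (Htilde n m lam (eff_dim Sig lam) (\<lambda>j. X j s0))
                   - integral\<^sup>L M (\<lambda>s. matrix_inv (Htilde n m lam (eff_dim Sig lam) (\<lambda>j. X j s))))"
    and Om_def: "Om = integral\<^sup>L M (\<lambda>s. matrix_inv (Htilde n m lam (eff_dim Sig lam) (\<lambda>j. X j s)))
                   - matrix_inv (Sig + lam *\<^sub>R mat 1)"
    and smin_def: "smin = Min (eigenvalues Sig)"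
    and smax_def: "smax = Max (eigenvalues Sig)"
    and alpha_def: "alpha = (smax + lam + a0) * (a0 / lam\<^sup>2 + a1 + spec_norm Om)"
    and beta_def: "beta = sqrt 2 * alpha / sqrt (1 - alpha\<^sup>2)
                   * sqrt ((smax + lam + a0) / (smin + lam - a0))"
    and alpha_lt1: "alpha < 1"
    and denom_pos: "smin + lam - a0 > 0"
  shows "\<forall>t. norm (w (Suc t) - wstar) \<le> beta * norm (w t - wstar)"
proof -
  define H where "H = (1 / real n) *\<^sub>R gram (\<lambda>j. X j s0) {..<n} + lam *\<^sub>R (mat 1 :: real^'d^'d)"
  define Q where "Q = matrix_inv (Htilde n m lam (eff_dim Sig lam) (\<lambda>j. X j s0))"
  define E where "E = integral\<^sup>L M (\<lambda>s. matrix_inv (Htilde n m lam (eff_dim Sig lam) (\<lambda>j. X j s)))"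
  have Sig_sym: "transpose Sig = Sig" using cov by (simp add: vec_eq_iff transpose_def mult.commute)
  have Sig_psd: "0 \<le> z \<bullet> (Sig *v z)" for z by (rule second_moment_psd[OF cov])
  note Sig_bound = psd_norm_mult_vec_le_Max_eigenvalues[OF Sig_sym Sig_psd, folded smax_def smin_def]
  have H_lower: "lam * norm x \<le> norm (H *v x)" for x
    unfolding H_def by (rule psd_add_scaleR_id_lower_bound)
      (simp add: scaleR_matrix_vector_assoc[symmetric] gram_quadratic_form sum_nonneg)
  have a0_eq: "spec_norm (Sig + lam *\<^sub>R mat 1 - H) = a0" by (simp add: a0_def H_def)
  have a1_eq: "spec_norm (Q - E) = a1" and Om_eq: "E - matrix_inv (Sig + lam *\<^sub>R mat 1) = Om"
    by (simp_all add: a1_def Om_def Q_def E_def)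
  have a0_nonneg: "0 \<le> a0" and a1_nonneg: "0 \<le> a1" unfolding a0_def a1_def by (rule spec_norm_nonneg)+
  then have "0 \<le> alpha" unfolding alpha_def using Sig_bound(2) lam_pos spec_norm_nonneg[of Om] by simp
  then have alpha_le_beta: "alpha \<le> beta" unfolding beta_def
    using Sig_bound(3) a0_nonneg alpha_lt1 denom_pos by (intro le_sqrt2_mult_div_sqrt_one_minus_square) auto
  show ?thesis
  proof
    fix t
    have "g (w t) = H *v (w t - wstar)"
      unfolding H_def by (rule ridge_gradient_eq[OF f_def g_grad[rule_format] wstar_min[rule_format]])
    then have step: "w (Suc t) - wstar = (w t - wstar) - Q *v (H *v (w t - wstar))"
      by (simp add: iter Q_def)
    have "norm (w (Suc t) - wstar) \<le> alpha * norm (w t - wstar)"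
      using preconditioned_step_contraction[OF lam_pos Sig_psd Sig_bound(1) H_lower, where Q = Q and E = E]
      unfolding step by (simp only: a0_eq a1_eq Om_eq alpha_def)
    also have "\<dots> \<le> beta * norm (w t - wstar)" by (rule mult_right_mono[OF alpha_le_beta norm_ge_zero])
    finally show "norm (w (Suc t) - wstar) \<le> beta * norm (w t - wstar)" .
  qed
qed

end
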